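(* Let $\mathcal{C}_3=\mathbb{C}\{e_1,e_2,e_3\}$ be the complex Clifford algebra with generators satisfying $e_j^2=-1$ and $e_je_k=-e_ke_j$ ($j\neq k$), of dimension $8$, and let $e_{[3]}=e_1e_2e_3$, so that $e_{[3]}^2=1$. Let $\mathcal{C}_2\subset\mathcal{C}_3$ be the subalgebra with basis $1,e_1,e_2,e_{12}=e_1e_2$. Then every $a\in\mathcal{C}_3$ can be written as $a=a_0+a_1e_{[3]}$ with $a_0,a_1\in\mathcal{C}_2$. Define $\overline{a}=a_0-a_1e_{[3]}$ and $D_a=\mathrm{diag}(aI_2,\overline{a}I_2)$. Let $$P_2=\frac12\begin{pmatrix}1-ie_1 & e_2+ie_{12}\\ -e_2+ie_{12} & 1+ie_1\end{pmatrix}\ (=P_2^{-1}),$$ $$P_3=\frac12\begin{pmatrix}(1+e_{[3]})P_2 & -(1-e_{[3]})P_2\\ (1-e_{[3]})P_2 & (1+e_{[3]})P_2\end{pmatrix},\qquad P_3'=\frac12\begin{pmatrix}P_2^{-1}(1+e_{[3]}) & P_2^{-1}(1-e_{[3]})\\ -P_2^{-1}(1-e_{[3]}) & P_2^{-1}(1+e_{[3]})\end{pmatrix}.$$ Then $P_3$ is invertible with $P_3^{-1}=P_3'$, and $$P_3D_aP_3^{-1}=\begin{pmatrix}\phi_2(a_0)+\phi_2(a_1) & 0\\ 0 & \phi_2(a_0)-\phi_2(a_1)\end{pmatrix},$$ a block diagonal matrix with two $2\times 2$ complex blocks.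
   Context: For $b=b_0+b_1e_1+b_2e_2+b_3e_{12}\in\mathcal{C}_2$ ($b_j\in\mathbb{C}$), $\phi_2(b)=\begin{pmatrix}b_0+b_1i & -(b_2+b_3i)\\ b_2-b_3i & b_0-b_1i\end{pmatrix}\in\mathbb{C}^{2\times 2}$. $i$ is the imaginary unit of $\mathbb{C}$. For an element $c$ and a matrix $M$, $cM$ (resp. $Mc$) denotes the matrix with entries $cM_{jk}$ (resp. $M_{jk}c$). *)

theory Defs
  imports Complex_Main
begin

text \<open>Basis blades of C_3 are indexed by triples (b1,b2,b3) of booleans, standing for
  the ordered product e1^b1 e2^b2 e3^b3. An element of C_3 is a complex coefficient
  function on the 8 blades.\<close>

type_synonym blade = "bool \<times> bool \<times> bool"

typedef clif3 = "UNIV :: (blade \<Rightarrow> complex) set" by simp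

setup_lifting type_definition_clif3

definition bset :: "blade \<Rightarrow> nat set" where
  "bset = (\<lambda>(b1, b2, b3). {i. (i = 1 \<and> b1) \<or> (i = 2 \<and> b2) \<or> (i = 3 \<and> b3)})"

definition bxor :: "blade \<Rightarrow> blade \<Rightarrow> blade" where
  "bxor = (\<lambda>(a1, a2, a3) (b1, b2, b3). (a1 \<noteq> b1, a2 \<noteq> b2, a3 \<noteq> b3))"

text \<open>Sign of e_A e_B = sign * e_(A xor B), using e_j^2 = -1 and anticommutation.\<close>
definition bsign :: "blade \<Rightarrow> blade \<Rightarrow> complex" where
  "bsign A B = (-1) ^ (card {(i, j). i \<in> bset A \<and> j \<in> bset B \<and> j < i}
                       + card (bset A \<inter> bset B))"

instantiation clif3 :: ab_group_add
begin
lift_definition zero_clif3 :: clif3 is "\<lambda>_. 0" .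
lift_definition plus_clif3 :: "clif3 \<Rightarrow> clif3 \<Rightarrow> clif3" is "\<lambda>x y B. x B + y B" .
lift_definition minus_clif3 :: "clif3 \<Rightarrow> clif3 \<Rightarrow> clif3" is "\<lambda>x y B. x B - y B" .
lift_definition uminus_clif3 :: "clif3 \<Rightarrow> clif3" is "\<lambda>x B. - x B" .
instance by standard (transfer; auto simp: algebra_simps)+
end

instantiation clif3 :: "{times, one}"
begin
lift_definition one_clif3 :: clif3 is "\<lambda>B. if B = (False, False, False) then 1 else 0" .
lift_definition times_clif3 :: "clif3 \<Rightarrow> clif3 \<Rightarrow> clif3" is
  "\<lambda>x y C. \<Sum>A\<in>UNIV. \<Sum>B\<in>UNIV. if bxor A B = C then bsign A B * x A * y B else 0" .
instance ..
end

lift_definition scal :: "complex \<Rightarrow> clif3" is "\<lambda>c B. if B = (False, False, False) then c else 0" .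
lift_definition coeff :: "clif3 \<Rightarrow> blade \<Rightarrow> complex" is "\<lambda>x B. x B" .

lift_definition e1 :: clif3 is "\<lambda>B. if B = (True, False, False) then 1 else 0" .
lift_definition e2 :: clif3 is "\<lambda>B. if B = (False, True, False) then 1 else 0" .
lift_definition e3 :: clif3 is "\<lambda>B. if B = (False, False, True) then 1 else 0" .

definition e12 :: clif3 where "e12 = e1 * e2"
definition e123 :: clif3 where "e123 = e1 * e2 * e3"

definition C2 :: "clif3 set" where
  "C2 = {x. \<forall>b1 b2. coeff x (b1, b2, True) = 0}"

definition phi2 :: "clif3 \<Rightarrow> nat \<Rightarrow> nat \<Rightarrow> complex" where
  "phi2 b = (let b0 = coeff b (False, False, False); b1 = coeff b (True, False, False);
                 b2 = coeff b (False, True, False); b3 = coeff b (True, True, False) in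
     (\<lambda>i j. if i = 0 \<and> j = 0 then b0 + b1 * \<i>
            else if i = 0 \<and> j = 1 then - (b2 + b3 * \<i>)
            else if i = 1 \<and> j = 0 then b2 - b3 * \<i>
            else b0 - b1 * \<i>))"

definition mmul :: "nat \<Rightarrow> (nat \<Rightarrow> nat \<Rightarrow> clif3) \<Rightarrow> (nat \<Rightarrow> nat \<Rightarrow> clif3) \<Rightarrow> nat \<Rightarrow> nat \<Rightarrow> clif3" where
  "mmul n A B = (\<lambda>i j. \<Sum>k<n. A i k * B k j)"

definition idm :: "nat \<Rightarrow> nat \<Rightarrow> clif3" where
  "idm = (\<lambda>i j. if i = j then 1 else 0)"

definition lmul :: "clif3 \<Rightarrow> (nat \<Rightarrow> nat \<Rightarrow> clif3) \<Rightarrow> nat \<Rightarrow> nat \<Rightarrow> clif3" where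
  "lmul c M = (\<lambda>i j. c * M i j)"
definition rmul :: "(nat \<Rightarrow> nat \<Rightarrow> clif3) \<Rightarrow> clif3 \<Rightarrow> nat \<Rightarrow> nat \<Rightarrow> clif3" where
  "rmul M c = (\<lambda>i j. M i j * c)"

definition blk :: "(nat \<Rightarrow> nat \<Rightarrow> 'a) \<Rightarrow> (nat \<Rightarrow> nat \<Rightarrow> 'a) \<Rightarrow> (nat \<Rightarrow> nat \<Rightarrow> 'a) \<Rightarrow> (nat \<Rightarrow> nat \<Rightarrow> 'a)
                   \<Rightarrow> nat \<Rightarrow> nat \<Rightarrow> 'a" where
  "blk A B C D = (\<lambda>i j. if i < 2 then (if j < 2 then A i j else B i (j - 2))
                        else (if j < 2 then C (i - 2) j else D (i - 2) (j - 2)))"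

definition m2 :: "'a \<Rightarrow> 'a \<Rightarrow> 'a \<Rightarrow> 'a \<Rightarrow> nat \<Rightarrow> nat \<Rightarrow> 'a" where
  "m2 a b c d = (\<lambda>i j. if i = 0 then (if j = 0 then a else b) else (if j = 0 then c else d))"

definition P2 :: "nat \<Rightarrow> nat \<Rightarrow> clif3" where
  "P2 = lmul (scal (1/2)) (m2 (1 - scal \<i> * e1) (e2 + scal \<i> * e12)
                              (- e2 + scal \<i> * e12) (1 + scal \<i> * e1))"

text \<open>P2 is its own inverse, so P2^{-1} below is P2.\<close>
definition P3 :: "nat \<Rightarrow> nat \<Rightarrow> clif3" where
  "P3 = lmul (scal (1/2)) (blk (lmul (1 + e123) P2) (lmul (- (1 - e123)) P2)
                               (lmul (1 - e123) P2) (lmul (1 + e123) P2))"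

definition P3' :: "nat \<Rightarrow> nat \<Rightarrow> clif3" where
  "P3' = lmul (scal (1/2)) (blk (rmul P2 (1 + e123)) (rmul P2 (1 - e123))
                                (rmul P2 (- (1 - e123))) (rmul P2 (1 + e123)))"

definition Dm :: "clif3 \<Rightarrow> clif3 \<Rightarrow> nat \<Rightarrow> nat \<Rightarrow> clif3" where
  "Dm a abar = (\<lambda>i j. if i = j then (if i < 2 then a else abar) else 0)"

end

theory Submission
  imports Defs "HOL-Library.Function_Algebras"
begin

text \<open>The elements p = (1 + e123)/2 and q = (1 - e123)/2 are central orthogonal idempotents
  with p + q = 1, p e123 = p and q e123 = -q. In block form
  P3 = [[p P2, -q P2], [q P2, p P2]] and P3' = [[p P2, q P2], [-q P2, p P2]], so for a
  block diagonal D = diag(X, Y) the product P3 D P3' is block diagonal with blocks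
  p P2 X P2 + q P2 Y P2 and q P2 X P2 + p P2 Y P2. For D = I this gives P3 P3' = diag(P2^2, P2^2),
  and the same computation with q replaced by -q gives P3' P3. For D = D_a the identities
  p a = p (a0 + a1), q abar = q (a0 + a1), q a = q (a0 - a1), p abar = p (a0 - a1) collapse the
  blocks to P2 (a0 + a1) P2 and P2 (a0 - a1) P2, and P2 (b I) P2 = phi2 b for b in C2 is a direct
  computation in coordinates.\<close>

section \<open>Coordinates and the ring structure of C_3\<close>

lemma bset_eq:
  "bset (b1, b2, b3) = (if b1 then {1} else {}) \<union> (if b2 then {2} else {}) \<union> (if b3 then {3} else {})"
  unfolding bset_def by auto

lemma bsign_eq:
  "bsign (a1, a2, a3) (b1, b2, b3) =
     (-1) ^ (of_bool (a2 \<and> b1) + of_bool (a3 \<and> b1) + of_bool (a3 \<and> b2)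
             + of_bool (a1 \<and> b1) + of_bool (a2 \<and> b2) + of_bool (a3 \<and> b3))"
proof -
  have inversions: "{(i, j). i \<in> S \<and> j \<in> T \<and> j < (i::nat)} = (S \<times> T) \<inter> {(i, j). j < i}"
    for S T by auto
  show ?thesis
    unfolding bsign_def inversions bset_eq
    by (cases a1; cases a2; cases a3; cases b1; cases b2; cases b3) simp_all
qed

lemma bxor_eq: "bxor (a1, a2, a3) (b1, b2, b3) = (a1 \<noteq> b1, a2 \<noteq> b2, a3 \<noteq> b3)"
  unfolding bxor_def by simp

lemma UNIV_blade:
  "(UNIV :: blade set) =
     {(False, False, False), (True, False, False), (False, True, False), (True, True, False),
      (False, False, True), (True, False, True), (False, True, True), (True, True, True)}"
  by auto

text \<open>Coordinates with respect to the basis 1, e1, e2, e12, e3, e13, e23, e123.\<close>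
definition mk_clif3 ::
    "complex \<Rightarrow> complex \<Rightarrow> complex \<Rightarrow> complex \<Rightarrow> complex \<Rightarrow> complex \<Rightarrow> complex \<Rightarrow> complex \<Rightarrow> clif3"
  where
  "mk_clif3 c0 c1 c2 c3 c4 c5 c6 c7 = Abs_clif3 (\<lambda>(b1, b2, b3).
     if b3 then (if b2 then (if b1 then c7 else c6) else (if b1 then c5 else c4))
     else (if b2 then (if b1 then c3 else c2) else (if b1 then c1 else c0)))"

lemma Rep_mk_clif3: "Rep_clif3 (mk_clif3 c0 c1 c2 c3 c4 c5 c6 c7) = (\<lambda>(b1, b2, b3).
     if b3 then (if b2 then (if b1 then c7 else c6) else (if b1 then c5 else c4))
     else (if b2 then (if b1 then c3 else c2) else (if b1 then c1 else c0)))"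
  unfolding mk_clif3_def by (simp add: Abs_clif3_inverse)

lemma mk_clif3_mult:
  "mk_clif3 a0 a1 a2 a3 a4 a5 a6 a7 * mk_clif3 b0 b1 b2 b3 b4 b5 b6 b7 = mk_clif3
  (a0 * b0 - a1 * b1 - a2 * b2 - a3 * b3 - a4 * b4 - a5 * b5 - a6 * b6 + a7 * b7)
  (a0 * b1 + a1 * b0 + a2 * b3 - a3 * b2 + a4 * b5 - a5 * b4 - a6 * b7 - a7 * b6)
  (a0 * b2 - a1 * b3 + a2 * b0 + a3 * b1 + a4 * b6 + a5 * b7 - a6 * b4 + a7 * b5)
  (a0 * b3 + a1 * b2 - a2 * b1 + a3 * b0 - a4 * b7 + a5 * b6 - a6 * b5 - a7 * b4)
  (a0 * b4 - a1 * b5 - a2 * b6 - a3 * b7 + a4 * b0 + a5 * b1 + a6 * b2 - a7 * b3)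
  (a0 * b5 + a1 * b4 + a2 * b7 - a3 * b6 - a4 * b1 + a5 * b0 + a6 * b3 + a7 * b2)
  (a0 * b6 - a1 * b7 + a2 * b4 + a3 * b5 - a4 * b2 - a5 * b3 + a6 * b0 - a7 * b1)
  (a0 * b7 + a1 * b6 - a2 * b5 + a3 * b4 + a4 * b3 - a5 * b2 + a6 * b1 + a7 * b0)"
  by (rule Rep_clif3_inject[THEN iffD1], rule ext, clarify)
    (simp add: times_clif3.rep_eq Rep_mk_clif3 UNIV_blade bxor_eq bsign_eq algebra_simps)

lemma mk_clif3_eq:
  "mk_clif3 a0 a1 a2 a3 a4 a5 a6 a7 = mk_clif3 b0 b1 b2 b3 b4 b5 b6 b7 \<longleftrightarrow>
   a0 = b0 \<and> a1 = b1 \<and> a2 = b2 \<and> a3 = b3 \<and> a4 = b4 \<and> a5 = b5 \<and> a6 = b6 \<and> a7 = b7"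
  by (auto simp: Rep_clif3_inject[symmetric] Rep_mk_clif3 fun_eq_iff split_paired_all
      all_bool_eq)

lemma clif3_coords_cases:
  obtains c0 c1 c2 c3 c4 c5 c6 c7 where "x = mk_clif3 c0 c1 c2 c3 c4 c5 c6 c7"
proof
  show "x = mk_clif3 (coeff x (False, False, False)) (coeff x (True, False, False))
     (coeff x (False, True, False)) (coeff x (True, True, False)) (coeff x (False, False, True))
     (coeff x (True, False, True)) (coeff x (False, True, True)) (coeff x (True, True, True))"
    by (rule Rep_clif3_inject[THEN iffD1]) (auto simp: coeff.rep_eq Rep_mk_clif3)
qed

lemma mk_clif3_add: "mk_clif3 a0 a1 a2 a3 a4 a5 a6 a7 + mk_clif3 b0 b1 b2 b3 b4 b5 b6 b7
    = mk_clif3 (a0 + b0) (a1 + b1) (a2 + b2) (a3 + b3) (a4 + b4) (a5 + b5) (a6 + b6) (a7 + b7)"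
  by (rule Rep_clif3_inject[THEN iffD1]) (auto simp: plus_clif3.rep_eq Rep_mk_clif3)

lemma mk_clif3_diff: "mk_clif3 a0 a1 a2 a3 a4 a5 a6 a7 - mk_clif3 b0 b1 b2 b3 b4 b5 b6 b7
    = mk_clif3 (a0 - b0) (a1 - b1) (a2 - b2) (a3 - b3) (a4 - b4) (a5 - b5) (a6 - b6) (a7 - b7)"
  by (rule Rep_clif3_inject[THEN iffD1]) (auto simp: minus_clif3.rep_eq Rep_mk_clif3)

lemma mk_clif3_uminus: "- mk_clif3 a0 a1 a2 a3 a4 a5 a6 a7
    = mk_clif3 (- a0) (- a1) (- a2) (- a3) (- a4) (- a5) (- a6) (- a7)"
  by (rule Rep_clif3_inject[THEN iffD1]) (auto simp: uminus_clif3.rep_eq Rep_mk_clif3)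

lemma zero_clif3_eq: "0 = mk_clif3 0 0 0 0 0 0 0 0"
  by (rule Rep_clif3_inject[THEN iffD1]) (auto simp: zero_clif3.rep_eq Rep_mk_clif3)

lemma one_clif3_eq: "1 = mk_clif3 1 0 0 0 0 0 0 0"
  by (rule Rep_clif3_inject[THEN iffD1]) (auto simp: one_clif3.rep_eq Rep_mk_clif3)

instance clif3 :: ring_1
proof
  fix a b c :: clif3
  obtain a0 a1 a2 a3 a4 a5 a6 a7 where a: "a = mk_clif3 a0 a1 a2 a3 a4 a5 a6 a7"
    by (rule clif3_coords_cases)
  obtain b0 b1 b2 b3 b4 b5 b6 b7 where b: "b = mk_clif3 b0 b1 b2 b3 b4 b5 b6 b7"
    by (rule clif3_coords_cases)
  obtain c0 c1 c2 c3 c4 c5 c6 c7 where c: "c = mk_clif3 c0 c1 c2 c3 c4 c5 c6 c7"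
    by (rule clif3_coords_cases)
  show "a * b * c = a * (b * c)"
    by (simp add: a b c mk_clif3_mult mk_clif3_eq algebra_simps)
  show "(a + b) * c = a * c + b * c"
    by (simp add: a b c mk_clif3_mult mk_clif3_add mk_clif3_eq algebra_simps)
  show "a * (b + c) = a * b + a * c"
    by (simp add: a b c mk_clif3_mult mk_clif3_add mk_clif3_eq algebra_simps)
  show "1 * a = a" "a * 1 = a"
    by (simp_all add: a one_clif3_eq mk_clif3_mult)
  show "(0::clif3) \<noteq> 1"
    by (simp add: zero_clif3_eq one_clif3_eq mk_clif3_eq)
qed

lemma coeff_mk_clif3:
  "coeff (mk_clif3 c0 c1 c2 c3 c4 c5 c6 c7) (False, False, False) = c0"
  "coeff (mk_clif3 c0 c1 c2 c3 c4 c5 c6 c7) (True, False, False) = c1"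
  "coeff (mk_clif3 c0 c1 c2 c3 c4 c5 c6 c7) (False, True, False) = c2"
  "coeff (mk_clif3 c0 c1 c2 c3 c4 c5 c6 c7) (True, True, False) = c3"
  "coeff (mk_clif3 c0 c1 c2 c3 c4 c5 c6 c7) (False, False, True) = c4"
  "coeff (mk_clif3 c0 c1 c2 c3 c4 c5 c6 c7) (True, False, True) = c5"
  "coeff (mk_clif3 c0 c1 c2 c3 c4 c5 c6 c7) (False, True, True) = c6"
  "coeff (mk_clif3 c0 c1 c2 c3 c4 c5 c6 c7) (True, True, True) = c7"
  by (simp_all add: coeff.rep_eq Rep_mk_clif3)

lemma scal_eq: "scal c = mk_clif3 c 0 0 0 0 0 0 0"
  by (rule Rep_clif3_inject[THEN iffD1]) (auto simp: scal.rep_eq Rep_mk_clif3)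

lemma e1_eq: "e1 = mk_clif3 0 1 0 0 0 0 0 0"
  by (rule Rep_clif3_inject[THEN iffD1]) (auto simp: e1.rep_eq Rep_mk_clif3)

lemma e2_eq: "e2 = mk_clif3 0 0 1 0 0 0 0 0"
  by (rule Rep_clif3_inject[THEN iffD1]) (auto simp: e2.rep_eq Rep_mk_clif3)

lemma e3_eq: "e3 = mk_clif3 0 0 0 0 1 0 0 0"
  by (rule Rep_clif3_inject[THEN iffD1]) (auto simp: e3.rep_eq Rep_mk_clif3)

lemma e12_eq: "e12 = mk_clif3 0 0 0 1 0 0 0 0"
  by (simp add: e12_def e1_eq e2_eq mk_clif3_mult)

lemma e123_eq: "e123 = mk_clif3 0 0 0 0 0 0 0 1"
  by (simp add: e123_def e1_eq e2_eq e3_eq mk_clif3_mult)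

lemmas clif3_coords = mk_clif3_mult mk_clif3_add mk_clif3_diff mk_clif3_uminus
  zero_clif3_eq one_clif3_eq scal_eq e1_eq e2_eq e12_eq e123_eq

lemma coeff_add: "coeff (x + y) B = coeff x B + coeff y B"
  by transfer simp

lemma coeff_diff: "coeff (x - y) B = coeff x B - coeff y B"
  by transfer simp

lemma C2_add: "x \<in> C2 \<Longrightarrow> y \<in> C2 \<Longrightarrow> x + y \<in> C2"
  by (simp add: C2_def coeff_add)

lemma C2_diff: "x \<in> C2 \<Longrightarrow> y \<in> C2 \<Longrightarrow> x - y \<in> C2"
  by (simp add: C2_def coeff_diff)

lemma mk_clif3_in_C2:
  "mk_clif3 c0 c1 c2 c3 c4 c5 c6 c7 \<in> C2 \<longleftrightarrow> c4 = 0 \<and> c5 = 0 \<and> c6 = 0 \<and> c7 = 0"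
  by (auto simp: C2_def all_bool_eq coeff_mk_clif3)

lemma phi2_add: "phi2 (x + y) i j = phi2 x i j + phi2 y i j"
  by (simp add: phi2_def coeff_add Let_def algebra_simps)

lemma phi2_diff: "phi2 (x - y) i j = phi2 x i j - phi2 y i j"
  by (simp add: phi2_def coeff_diff Let_def algebra_simps)

lemma ex1_C2_e123_decomposition: "\<exists>!(a0, a1). a0 \<in> C2 \<and> a1 \<in> C2 \<and> a = a0 + a1 * e123"
proof -
  obtain c0 c1 c2 c3 c4 c5 c6 c7 where a: "a = mk_clif3 c0 c1 c2 c3 c4 c5 c6 c7"
    by (rule clif3_coords_cases)
  show ?thesis
  proof (rule ex1I[of _ "(mk_clif3 c0 c1 c2 c3 0 0 0 0, mk_clif3 c7 (- c6) c5 (- c4) 0 0 0 0)"])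
    fix d assume d: "case d of (a0, a1) \<Rightarrow> a0 \<in> C2 \<and> a1 \<in> C2 \<and> a = a0 + a1 * e123"
    obtain x y where xy: "d = (x, y)" by fastforce
    obtain x0 x1 x2 x3 x4 x5 x6 x7 where x: "x = mk_clif3 x0 x1 x2 x3 x4 x5 x6 x7"
      by (rule clif3_coords_cases)
    obtain y0 y1 y2 y3 y4 y5 y6 y7 where y: "y = mk_clif3 y0 y1 y2 y3 y4 y5 y6 y7"
      by (rule clif3_coords_cases)
    show "d = (mk_clif3 c0 c1 c2 c3 0 0 0 0, mk_clif3 c7 (- c6) c5 (- c4) 0 0 0 0)"
      using d by (simp add: xy x y a mk_clif3_in_C2 clif3_coords mk_clif3_eq)
  qed (simp add: a mk_clif3_in_C2 clif3_coords mk_clif3_eq)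
qed

section \<open>Central elements and the idempotents (1 \<plusminus> e123)/2\<close>

definition central :: "'a::semigroup_mult \<Rightarrow> bool" where
  "central c \<longleftrightarrow> (\<forall>x. c * x = x * c)"

lemma central_one: "central (1::'a::ring_1)"
  by (simp add: central_def)

lemma central_add: "central c \<Longrightarrow> central d \<Longrightarrow> central (c + d :: 'a::ring)"
  by (simp add: central_def algebra_simps)

lemma central_diff: "central c \<Longrightarrow> central d \<Longrightarrow> central (c - d :: 'a::ring)"
  by (simp add: central_def algebra_simps)

lemma central_uminus: "central c \<Longrightarrow> central (- c :: 'a::ring)"
  by (simp add: central_def)

lemma central_mult: "central c \<Longrightarrow> central d \<Longrightarrow> central (c * d :: 'a::semigroup_mult)"
  unfolding central_def by (metis mult.assoc)

lemma central_scal: "central (scal c)"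
  unfolding central_def
proof
  fix x
  obtain x0 x1 x2 x3 x4 x5 x6 x7 where "x = mk_clif3 x0 x1 x2 x3 x4 x5 x6 x7"
    by (rule clif3_coords_cases)
  then show "scal c * x = x * scal c"
    by (simp add: clif3_coords mk_clif3_eq algebra_simps)
qed

lemma central_e123: "central e123"
  unfolding central_def
proof
  fix x
  obtain x0 x1 x2 x3 x4 x5 x6 x7 where "x = mk_clif3 x0 x1 x2 x3 x4 x5 x6 x7"
    by (rule clif3_coords_cases)
  then show "e123 * x = x * e123"
    by (simp add: clif3_coords mk_clif3_eq algebra_simps)
qed

definition proj_plus :: clif3 where "proj_plus = scal (1/2) * (1 + e123)"
definition proj_minus :: clif3 where "proj_minus = scal (1/2) * (1 - e123)"

lemma central_proj_plus: "central proj_plus"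
  by (simp add: proj_plus_def central_mult central_add central_scal central_one central_e123)

lemma central_proj_minus: "central proj_minus"
  by (simp add: proj_minus_def central_mult central_diff central_scal central_one central_e123)

lemma proj_plus_eq: "proj_plus = mk_clif3 (1/2) 0 0 0 0 0 0 (1/2)"
  by (simp add: proj_plus_def clif3_coords)

lemma proj_minus_eq: "proj_minus = mk_clif3 (1/2) 0 0 0 0 0 0 (- 1/2)"
  by (simp add: proj_minus_def clif3_coords)

lemma proj_plus_idem: "proj_plus * proj_plus = proj_plus"
  and proj_minus_idem: "proj_minus * proj_minus = proj_minus"
  and proj_plus_minus_orth: "proj_plus * proj_minus = 0"
  and proj_plus_add_minus: "proj_plus + proj_minus = 1"
  and proj_plus_e123: "proj_plus * e123 = proj_plus"
  and proj_minus_e123: "proj_minus * e123 = - proj_minus"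
  by (simp_all add: proj_plus_eq proj_minus_eq clif3_coords mk_clif3_eq)

section \<open>Block matrices\<close>

text \<open>Matrices are total functions on indices; the following identities hold at every index,
  not only inside the n x n block, because mmul n reads only the first n rows and columns.\<close>

lemma mmul_blk:
  "mmul 4 (blk A B C D) (blk A' B' C' D') =
     blk (mmul 2 A A' + mmul 2 B C') (mmul 2 A B' + mmul 2 B D')
         (mmul 2 C A' + mmul 2 D C') (mmul 2 C B' + mmul 2 D D')"
  by (simp add: fun_eq_iff mmul_def blk_def numeral_eq_Suc add_ac)

lemma blk_idm: "blk idm 0 0 idm = idm"
  by (auto simp: fun_eq_iff blk_def idm_def)

lemma Dm_eq_blk: "Dm a b = blk (lmul a idm) 0 0 (lmul b idm)"
  by (auto simp: fun_eq_iff Dm_def blk_def lmul_def idm_def)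

lemma mmul_zero_left [simp]: "mmul n 0 A = 0"
  and mmul_zero_right [simp]: "mmul n A 0 = 0"
  by (simp_all add: fun_eq_iff mmul_def)

lemma mmul_add_left: "mmul n (A + B) C = mmul n A C + mmul n B C"
  and mmul_add_right: "mmul n A (B + C) = mmul n A B + mmul n A C"
  by (simp_all add: fun_eq_iff mmul_def algebra_simps sum.distrib)

lemma mmul_mmul_idm: "mmul n (mmul n A idm) B = mmul n A B"
  by (simp add: fun_eq_iff mmul_def idm_def if_distrib cong: if_cong)

lemma lmul_lmul: "lmul c (lmul d A) = lmul (c * d) A"
  by (simp add: fun_eq_iff lmul_def mult.assoc)

lemma lmul_add: "lmul (c + d) A = lmul c A + lmul d A"
  by (simp add: fun_eq_iff lmul_def algebra_simps)

lemma lmul_one: "lmul 1 A = A"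
  by (simp add: fun_eq_iff lmul_def)

lemma lmul_zero: "lmul 0 A = 0"
  by (simp add: fun_eq_iff lmul_def)

lemma lmul_blk: "lmul c (blk A B C D) = blk (lmul c A) (lmul c B) (lmul c C) (lmul c D)"
  by (simp add: fun_eq_iff lmul_def blk_def)

lemma rmul_eq_lmul: "central c \<Longrightarrow> rmul M c = lmul c M"
  by (simp add: fun_eq_iff rmul_def lmul_def central_def)

lemma mmul_lmul_left: "mmul n (lmul c A) B = lmul c (mmul n A B)"
  by (simp add: fun_eq_iff mmul_def lmul_def sum_distrib_left mult.assoc)

lemma mmul_lmul_right:
  assumes "central c"
  shows "mmul n A (lmul c B) = lmul c (mmul n A B)"
proof -
  have "x * (c * y) = c * (x * y)" for x y
    using assms by (metis central_def mult.assoc)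
  then show ?thesis
    by (simp add: fun_eq_iff mmul_def lmul_def sum_distrib_left)
qed

lemma mmul_blk_central_conj:
  assumes p: "central p" and q: "central q" and pq: "p * q = 0"
  shows "mmul 4 (mmul 4 (blk (lmul p A) (lmul (- q) A) (lmul q A) (lmul p A)) (blk X 0 0 Y))
                 (blk (lmul p B) (lmul q B) (lmul (- q) B) (lmul p B))
       = blk (lmul (p * p) (mmul 2 (mmul 2 A X) B) + lmul (q * q) (mmul 2 (mmul 2 A Y) B)) 0 0
             (lmul (q * q) (mmul 2 (mmul 2 A X) B) + lmul (p * p) (mmul 2 (mmul 2 A Y) B))"
proof -
  have qp: "q * p = 0"
    using p pq by (simp add: central_def)
  show ?thesis
    by (simp add: mmul_blk mmul_lmul_left mmul_lmul_right p q central_uminus lmul_lmul pq qp lmul_zero)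
qed

lemma mmul_blk_central_inverse:
  assumes p: "central p" and q: "central q" and pq: "p * q = 0" and squares: "p * p + q * q = 1"
  shows "mmul 4 (blk (lmul p A) (lmul (- q) A) (lmul q A) (lmul p A))
                (blk (lmul p B) (lmul q B) (lmul (- q) B) (lmul p B))
       = blk (mmul 2 A B) 0 0 (mmul 2 A B)"
proof -
  have "q * q + p * p = 1"
    using squares by (simp add: add.commute)
  then show ?thesis
    using mmul_blk_central_conj[OF p q pq, of A idm idm B] squares
    by (simp add: blk_idm mmul_mmul_idm lmul_add[symmetric] lmul_one)
qed

section \<open>The matrices P2 and P3\<close>

lemma P2_entries:
  "P2 0 0 = mk_clif3 (1/2) (- \<i>/2) 0 0 0 0 0 0"
  "P2 0 1 = mk_clif3 0 0 (1/2) (\<i>/2) 0 0 0 0"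
  "P2 1 0 = mk_clif3 0 0 (- 1/2) (\<i>/2) 0 0 0 0"
  "P2 1 1 = mk_clif3 (1/2) (\<i>/2) 0 0 0 0 0 0"
  by (simp_all add: P2_def lmul_def m2_def clif3_coords mk_clif3_eq)

lemma P2_involution:
  assumes "i < 2" "j < 2"
  shows "mmul 2 P2 P2 i j = idm i j"
proof -
  have "i = 0 \<or> i = 1" "j = 0 \<or> j = 1"
    using assms by auto
  then show ?thesis
    by (elim disjE; simp add: mmul_def numeral_eq_Suc idm_def
        P2_entries[unfolded One_nat_def] clif3_coords mk_clif3_eq; simp add: field_simps)
qed

definition conj_P2 :: "clif3 \<Rightarrow> nat \<Rightarrow> nat \<Rightarrow> clif3" where
  "conj_P2 x = mmul 2 (mmul 2 P2 (lmul x idm)) P2"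

lemma phi2_mk_clif3: "phi2 (mk_clif3 c0 c1 c2 c3 c4 c5 c6 c7) = (\<lambda>i j.
    if i = 0 \<and> j = 0 then c0 + c1 * \<i> else if i = 0 \<and> j = 1 then - (c2 + c3 * \<i>)
    else if i = 1 \<and> j = 0 then c2 - c3 * \<i> else c0 - c1 * \<i>)"
  by (simp add: phi2_def coeff_mk_clif3 Let_def)

lemma conj_P2_phi2:
  assumes "x \<in> C2" "i < 2" "j < 2"
  shows "conj_P2 x i j = scal (phi2 x i j)"
proof -
  obtain c0 c1 c2 c3 c4 c5 c6 c7 where x: "x = mk_clif3 c0 c1 c2 c3 c4 c5 c6 c7"
    by (rule clif3_coords_cases)
  with assms(1) have "x = mk_clif3 c0 c1 c2 c3 0 0 0 0"
    by (simp add: mk_clif3_in_C2)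
  moreover have "i = 0 \<or> i = 1" "j = 0 \<or> j = 1"
    using assms(2,3) by auto
  ultimately show ?thesis
    by (elim disjE; simp add: conj_P2_def mmul_def numeral_eq_Suc lmul_def idm_def
        P2_entries[unfolded One_nat_def] phi2_mk_clif3 clif3_coords mk_clif3_eq;
        simp add: field_simps)
qed

lemma conj_P2_add: "conj_P2 (x + y) = conj_P2 x + conj_P2 y"
  by (simp add: conj_P2_def lmul_add mmul_add_left mmul_add_right)

lemma lmul_conj_P2: "central c \<Longrightarrow> lmul c (conj_P2 x) = conj_P2 (c * x)"
  by (simp add: conj_P2_def lmul_lmul[symmetric] mmul_lmul_left mmul_lmul_right)

lemma P3_eq_blk:
  "P3 = blk (lmul proj_plus P2) (lmul (- proj_minus) P2) (lmul proj_minus P2) (lmul proj_plus P2)"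
  unfolding P3_def lmul_blk lmul_lmul mult_minus_right
    proj_plus_def[symmetric] proj_minus_def[symmetric] ..

lemma P3'_eq_blk:
  "P3' = blk (lmul proj_plus P2) (lmul proj_minus P2) (lmul (- proj_minus) P2) (lmul proj_plus P2)"
proof -
  have plus: "central (1 + e123)" and minus: "central (1 - e123)"
    by (simp_all add: central_add central_diff central_one central_e123)
  show ?thesis
    unfolding P3'_def rmul_eq_lmul[OF plus] rmul_eq_lmul[OF minus]
      rmul_eq_lmul[OF central_uminus[OF minus]]
      lmul_blk lmul_lmul mult_minus_right proj_plus_def[symmetric] proj_minus_def[symmetric] ..
qed

lemma P3_inverse:
  assumes "i < 4" "j < 4"
  shows "mmul 4 P3 P3' i j = idm i j \<and> mmul 4 P3' P3 i j = idm i j"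
proof -
  have squares: "proj_plus * proj_plus + proj_minus * proj_minus = 1"
    by (simp add: proj_plus_idem proj_minus_idem proj_plus_add_minus)
  have "mmul 4 P3 P3' = blk (mmul 2 P2 P2) 0 0 (mmul 2 P2 P2)"
    unfolding P3_eq_blk P3'_eq_blk
    by (rule mmul_blk_central_inverse[OF central_proj_plus central_proj_minus proj_plus_minus_orth squares])
  moreover have "mmul 4 P3' P3 = blk (mmul 2 P2 P2) 0 0 (mmul 2 P2 P2)"
    using mmul_blk_central_inverse[OF central_proj_plus central_uminus[OF central_proj_minus], of P2 P2]
    by (simp add: P3_eq_blk P3'_eq_blk proj_plus_minus_orth squares)
  ultimately show ?thesis
    using assms P2_involution[of i j] P2_involution[of "i - 2" "j - 2"]
    by (auto simp: blk_def idm_def)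
qed

lemma P3_Dm_P3':
  "mmul 4 (mmul 4 P3 (Dm (a0 + a1 * e123) (a0 - a1 * e123))) P3'
     = blk (conj_P2 (a0 + a1)) 0 0 (conj_P2 (a0 - a1))"
proof -
  let ?p = proj_plus and ?q = proj_minus
  have "?p * (x * e123) = x * (?p * e123)" "?q * (x * e123) = x * (?q * e123)" for x
    using central_proj_plus central_proj_minus by (metis central_def mult.assoc)+
  then have p_e123: "?p * (x * e123) = ?p * x" and q_e123: "?q * (x * e123) = - (?q * x)" for x
    using central_proj_plus central_proj_minus by (simp_all add: proj_plus_e123 proj_minus_e123 central_def)
  have "mmul 4 (mmul 4 P3 (Dm (a0 + a1 * e123) (a0 - a1 * e123))) P3'
      = blk (lmul (?p * ?p) (conj_P2 (a0 + a1 * e123)) + lmul (?q * ?q) (conj_P2 (a0 - a1 * e123)))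
            0 0
            (lmul (?q * ?q) (conj_P2 (a0 + a1 * e123)) + lmul (?p * ?p) (conj_P2 (a0 - a1 * e123)))"
    unfolding P3_eq_blk P3'_eq_blk Dm_eq_blk conj_P2_def
    by (rule mmul_blk_central_conj[OF central_proj_plus central_proj_minus proj_plus_minus_orth])
  also have "\<dots> = blk (conj_P2 (?p * (a0 + a1)) + conj_P2 (?q * (a0 + a1))) 0 0
                      (conj_P2 (?q * (a0 - a1)) + conj_P2 (?p * (a0 - a1)))"
    by (simp add: proj_plus_idem proj_minus_idem lmul_conj_P2 central_proj_plus central_proj_minus
        distrib_left right_diff_distrib p_e123 q_e123)
  also have "\<dots> = blk (conj_P2 (a0 + a1)) 0 0 (conj_P2 (a0 - a1))"
    by (simp add: conj_P2_add[symmetric] distrib_right[symmetric] proj_plus_add_minus add.commute[of ?q])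
  finally show ?thesis .
qed

theorem theorem12:
  shows "(\<forall>a. \<exists>!(a0, a1). a0 \<in> C2 \<and> a1 \<in> C2 \<and> a = a0 + a1 * e123)
    \<and> (\<forall>i<2. \<forall>j<2. mmul 2 P2 P2 i j = idm i j)
    \<and> (\<forall>i<4. \<forall>j<4. mmul 4 P3 P3' i j = idm i j \<and> mmul 4 P3' P3 i j = idm i j)
    \<and> (\<forall>a a0 a1. a0 \<in> C2 \<longrightarrow> a1 \<in> C2 \<longrightarrow> a = a0 + a1 * e123 \<longrightarrow>
         (\<forall>i<4. \<forall>j<4.
            mmul 4 (mmul 4 P3 (Dm a (a0 - a1 * e123))) P3' i j
            = scal (blk (\<lambda>k l. phi2 a0 k l + phi2 a1 k l) (\<lambda>_ _. 0) (\<lambda>_ _. 0)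
                        (\<lambda>k l. phi2 a0 k l - phi2 a1 k l) i j)))"
proof (intro conjI allI impI)
  show "\<exists>!(a0, a1). a0 \<in> C2 \<and> a1 \<in> C2 \<and> a = a0 + a1 * e123" for a
    by (rule ex1_C2_e123_decomposition)
  show "mmul 2 P2 P2 i j = idm i j" if "i < 2" "j < 2" for i j
    using that by (rule P2_involution)
  show "mmul 4 P3 P3' i j = idm i j" "mmul 4 P3' P3 i j = idm i j" if "i < 4" "j < 4" for i j
    using P3_inverse[OF that] by simp_all
  have "scal 0 = 0"
    by (simp add: scal_eq zero_clif3_eq)
  then show "mmul 4 (mmul 4 P3 (Dm a (a0 - a1 * e123))) P3' i j
      = scal (blk (\<lambda>k l. phi2 a0 k l + phi2 a1 k l) (\<lambda>_ _. 0) (\<lambda>_ _. 0)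
                  (\<lambda>k l. phi2 a0 k l - phi2 a1 k l) i j)"
    if "a0 \<in> C2" "a1 \<in> C2" "a = a0 + a1 * e123" "i < 4" "j < 4" for a a0 a1 i j
    using that by (auto simp: P3_Dm_P3' blk_def conj_P2_phi2 C2_add C2_diff phi2_add phi2_diff)
qed

end
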